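(* Let $E, F$ be Banach lattices with $F$ having the property (d), and let $S, T: E \to F$ be operators with $0 \le S \le T$. If $T$ is almost Grothendieck, then $S$ is almost Grothendieck.
   Context: $F$ has the property (d) if $|y_n'| \to 0$ weak* in $F'$ for every disjoint weak* null sequence $(y_n')$ in $F'$. A bounded operator $T: E \to F$ is almost Grothendieck if $T'y_n' \to 0$ weakly in $E'$ for every disjoint weak* null sequence $(y_n') \subset F'$. *)

theory Defs
  imports "HOL-Analysis.Analysis"
begin

class banach_lattice = banach + ordered_real_vector + lattice +
  assumes lattice_norm: "sup x (- x) \<le> sup y (- y) \<Longrightarrow> norm x \<le> norm y"

definition lmod :: "'a::banach_lattice \<Rightarrow> 'a" where
  "lmod x = sup x (- x)"

text \<open>Lattice operations of the (order) dual, via the Riesz--Kantorovich formulas.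
  The modulus of a functional f, first on the positive cone, then extended linearly.\<close>
definition dual_abs_pos :: "('a::banach_lattice \<Rightarrow>\<^sub>L real) \<Rightarrow> 'a \<Rightarrow> real" where
  "dual_abs_pos f x = Sup {\<bar>f y\<bar> | y. lmod y \<le> x}"

definition dual_abs :: "('a::banach_lattice \<Rightarrow>\<^sub>L real) \<Rightarrow> 'a \<Rightarrow> real" where
  "dual_abs f x = dual_abs_pos f (sup x 0) - dual_abs_pos f (sup (- x) 0)"

definition dual_inf_pos :: "('a::banach_lattice \<Rightarrow> real) \<Rightarrow> ('a \<Rightarrow> real) \<Rightarrow> 'a \<Rightarrow> real" where
  "dual_inf_pos f g x = Inf {f y + g (x - y) | y. 0 \<le> y \<and> y \<le> x}"

definition dual_disjoint :: "('a::banach_lattice \<Rightarrow>\<^sub>L real) \<Rightarrow> ('a \<Rightarrow>\<^sub>L real) \<Rightarrow> bool" where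
  "dual_disjoint f g \<longleftrightarrow> (\<forall>x. 0 \<le> x \<longrightarrow> dual_inf_pos (dual_abs f) (dual_abs g) x = 0)"

definition disjoint_seq :: "(nat \<Rightarrow> ('a::banach_lattice \<Rightarrow>\<^sub>L real)) \<Rightarrow> bool" where
  "disjoint_seq y \<longleftrightarrow> (\<forall>n m. n \<noteq> m \<longrightarrow> dual_disjoint (y n) (y m))"

definition weak_star_null :: "(nat \<Rightarrow> ('a::real_normed_vector \<Rightarrow>\<^sub>L real)) \<Rightarrow> bool" where
  "weak_star_null y \<longleftrightarrow> (\<forall>x. (\<lambda>n. blinfun_apply (y n) x) \<longlonglongrightarrow> 0)"

definition weakly_null :: "(nat \<Rightarrow> 'a::real_normed_vector) \<Rightarrow> bool" where
  "weakly_null y \<longleftrightarrow> (\<forall>\<phi> :: 'a \<Rightarrow>\<^sub>L real. (\<lambda>n. blinfun_apply \<phi> (y n)) \<longlonglongrightarrow> 0)"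

definition property_d :: "'a::banach_lattice itself \<Rightarrow> bool" where
  "property_d _ \<longleftrightarrow> (\<forall>y :: nat \<Rightarrow> ('a \<Rightarrow>\<^sub>L real).
      disjoint_seq y \<and> weak_star_null y \<longrightarrow> (\<forall>x. (\<lambda>n. dual_abs (y n) x) \<longlonglongrightarrow> 0))"

definition almost_grothendieck :: "('a::banach_lattice \<Rightarrow>\<^sub>L 'b::banach_lattice) \<Rightarrow> bool" where
  "almost_grothendieck T \<longleftrightarrow> (\<forall>y :: nat \<Rightarrow> ('b \<Rightarrow>\<^sub>L real).
      disjoint_seq y \<and> weak_star_null y \<longrightarrow> weakly_null (\<lambda>n. y n o\<^sub>L T))"

definition positive_op :: "('a::banach_lattice \<Rightarrow>\<^sub>L 'b::banach_lattice) \<Rightarrow> bool" where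
  "positive_op T \<longleftrightarrow> (\<forall>x. 0 \<le> x \<longrightarrow> 0 \<le> T x)"

end

theory Submission
  imports Defs "HOL-Library.Lattice_Algebras"
begin

(* Write |f| for the modulus of a functional f. For positive x,
   |(S'y) x| = |y (S x)| <= |y| (S x) <= |y| (T x), so S'y_n lies between -T'|y_n| and T'|y_n|
   in E'. Since disjointness only depends on moduli, property (d) turns a disjoint weak* null
   sequence (y_n) into another one, (|y_n|); as T is almost Grothendieck, T'|y_n| -> 0 weakly.
   Weak nullity passes to sequences that are order bounded in this way: every Phi in E'' is the
   difference of two positive functionals, its positive part P and P - Phi, and a positive
   functional Psi satisfies |Psi (S'y_n)| <= Psi (T'|y_n|).
   The modulus in E' and the positive part in E'' come from the Riesz-Kantorovich formulas
   |f| x = sup {f y. |y| <= x} and P h = sup {Phi k. 0 <= k <= h}; the Riesz decomposition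
   property makes these suprema additive on the positive cone, so they extend to linear
   functionals. *)

section \<open>Arithmetic in Banach lattices\<close>

subclass (in banach_lattice) lattice_ab_group_add ..

lemma sup_zero_diff_self: "sup x 0 - x = sup (- x) (0::'a::banach_lattice)"
proof -
  have "sup x 0 - x = sup (x + - x) (0 + - x)"
    by (simp only: diff_conv_add_uminus add_sup_distrib_right)
  then show ?thesis by (simp add: sup_commute)
qed

lemma sup_zero_diff_sup_neg_zero: "sup x 0 - sup (- x) 0 = (x::'a::banach_lattice)"
proof -
  have "sup x 0 - sup (- x) 0 = sup x 0 - (sup x 0 - x)" by (simp only: sup_zero_diff_self)
  then show ?thesis by simp
qed

lemma lmod_le_iff: "lmod y \<le> x \<longleftrightarrow> y \<le> x \<and> - y \<le> (x::'a::banach_lattice)"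
  unfolding lmod_def by simp

lemma lmod_nonneg: "0 \<le> lmod (x::'a::banach_lattice)"
proof -
  have "x + - x \<le> lmod x + lmod x"
    unfolding lmod_def by (intro add_mono) auto
  then show ?thesis by simp
qed

lemma lmod_eq_self: "0 \<le> x \<Longrightarrow> lmod x = (x::'a::banach_lattice)"
  unfolding lmod_def by (rule sup_absorb1) (meson neg_le_0_iff_le order_trans)

lemma lmod_uminus: "lmod (- x) = lmod (x::'a::banach_lattice)"
  unfolding lmod_def by (simp add: sup_commute)

lemma lmod_eq_sup_zero_add: "lmod x = sup x 0 + sup (- x) (0::'a::banach_lattice)"
proof -
  have "sup x 0 + sup (- x) 0 = sup (x + sup (- x) 0) (0 + sup (- x) 0)"
    by (simp only: add_sup_distrib_right)
  also have "x + sup (- x) 0 = sup 0 x"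
    by (simp add: add_sup_distrib_left)
  finally have "sup x 0 + sup (- x) 0 = sup (sup x (- x)) 0"
    by (simp add: sup_commute sup_left_commute sup_assoc)
  also have "\<dots> = lmod x"
    using lmod_nonneg[of x] unfolding lmod_def by (simp add: sup_absorb1)
  finally show ?thesis by simp
qed

lemma norm_lmod: "norm (lmod (x::'a::banach_lattice)) = norm x"
  by (metis antisym lattice_norm lmod_def lmod_eq_self lmod_nonneg order_refl)

lemma norm_le_of_lmod_le: "lmod y \<le> x \<Longrightarrow> 0 \<le> x \<Longrightarrow> norm y \<le> norm (x::'a::banach_lattice)"
  using lattice_norm[of y x] lmod_eq_self[of x] unfolding lmod_def by simp

lemma norm_sup_zero_le: "norm (sup x 0) \<le> norm (x::'a::banach_lattice)"
proof -
  have "sup x 0 \<le> lmod x"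
    using lmod_nonneg[of x] unfolding lmod_def by simp
  then have "lmod (sup x 0) \<le> lmod x"
    by (simp add: lmod_eq_self)
  then show ?thesis using lattice_norm[of "sup x 0" x] unfolding lmod_def by simp
qed

lemma lmod_add_le: "lmod (a + b) \<le> lmod a + lmod (b::'a::banach_lattice)"
proof -
  have "a + b \<le> lmod a + lmod b" "- a + - b \<le> lmod a + lmod b"
    by (intro add_mono; simp add: lmod_def)+
  then show ?thesis unfolding lmod_le_iff by (simp add: algebra_simps)
qed

lemma lmod_diff_le_add: "0 \<le> p \<Longrightarrow> 0 \<le> q \<Longrightarrow> lmod (p - q) \<le> p + (q::'a::banach_lattice)"
  unfolding lmod_le_iff
  by (auto intro: add_increasing2 add_increasing order_trans[OF _ add_increasing[of q p p]]
       simp: algebra_simps)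

lemma scaleR_sup_distrib:
  "0 \<le> c \<Longrightarrow> c *\<^sub>R sup x y = sup (c *\<^sub>R x) (c *\<^sub>R (y::'a::banach_lattice))"
proof (cases "c = 0")
  case False
  assume "0 \<le> c"
  with False have c: "0 < c" by simp
  show ?thesis
  proof (rule antisym)
    have "inverse c *\<^sub>R (c *\<^sub>R x) \<le> inverse c *\<^sub>R sup (c *\<^sub>R x) (c *\<^sub>R y)"
      "inverse c *\<^sub>R (c *\<^sub>R y) \<le> inverse c *\<^sub>R sup (c *\<^sub>R x) (c *\<^sub>R y)"
      using c by (intro scaleR_left_mono; simp)+
    with c have "sup x y \<le> inverse c *\<^sub>R sup (c *\<^sub>R x) (c *\<^sub>R y)" by simp
    then have "c *\<^sub>R sup x y \<le> c *\<^sub>R (inverse c *\<^sub>R sup (c *\<^sub>R x) (c *\<^sub>R y))"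
      using c by (intro scaleR_left_mono) auto
    then show "c *\<^sub>R sup x y \<le> sup (c *\<^sub>R x) (c *\<^sub>R y)" using c by simp
  qed (use c in \<open>auto intro: scaleR_left_mono\<close>)
qed simp

lemma lmod_scaleR: "lmod (c *\<^sub>R x) = \<bar>c\<bar> *\<^sub>R lmod (x::'a::banach_lattice)"
proof (cases "0 \<le> c")
  case True
  then show ?thesis unfolding lmod_def by (simp add: scaleR_sup_distrib)
next
  case False
  then have "lmod (c *\<^sub>R x) = lmod ((- c) *\<^sub>R (- x))" by simp
  also have "\<dots> = (- c) *\<^sub>R lmod (- x)"
    unfolding lmod_def using False scaleR_sup_distrib[of "- c" "- x" x] by simp
  finally show ?thesis using False by (simp add: lmod_uminus)
qed

lemma riesz_decomposition:
  fixes u a b :: "'a::banach_lattice"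
  assumes "0 \<le> u" "u \<le> a + b" "0 \<le> a" "0 \<le> b"
  obtains u1 u2 where "u = u1 + u2" "0 \<le> u1" "u1 \<le> a" "0 \<le> u2" "u2 \<le> b"
proof
  show "u = inf u a + (u - inf u a)" by (metis add.commute diff_add_cancel)
  show "0 \<le> inf u a" "inf u a \<le> a" using assms by simp_all
  show "0 \<le> u - inf u a" by (simp only: diff_ge_0_iff_ge inf_le1)
  have "u \<le> inf (u + b) (a + b)" using assms by (simp add: add_increasing2)
  also have "\<dots> = inf u a + b" by (simp add: add_inf_distrib_right)
  finally show "u - inf u a \<le> b" by (simp only: diff_le_eq add.commute)
qed

lemma lmod_riesz_decomposition:
  fixes y x1 x2 :: "'a::banach_lattice"
  assumes "lmod y \<le> x1 + x2" "0 \<le> x1" "0 \<le> x2"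
  obtains y1 y2 where "y = y1 + y2" "lmod y1 \<le> x1" "lmod y2 \<le> x2"
proof -
  txt \<open>Split lmod y = p + q below x1 + x2 as w1 + w2, then p below w1 + w2 as p1 + p2;
    the pieces of y are 2 p1 - w1 and 2 p2 - w2.\<close>
  define p q where "p = sup y 0" and "q = sup (- y) 0"
  have "0 \<le> p" "0 \<le> q" unfolding p_def q_def by simp_all
  obtain w1 w2 where w: "p + q = w1 + w2" "0 \<le> w1" "w1 \<le> x1" "0 \<le> w2" "w2 \<le> x2"
    using riesz_decomposition[of "p + q" x1 x2] assms \<open>0 \<le> p\<close> \<open>0 \<le> q\<close>
    unfolding p_def q_def lmod_eq_sup_zero_add by auto
  have "p \<le> w1 + w2" using w(1) \<open>0 \<le> q\<close> by (metis le_add_same_cancel1)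
  then obtain p1 p2 where pp: "p = p1 + p2" "0 \<le> p1" "p1 \<le> w1" "0 \<le> p2" "p2 \<le> w2"
    using riesz_decomposition[of p w1 w2] \<open>0 \<le> p\<close> w by auto
  show thesis
  proof
    have "(p1 - (w1 - p1)) + (p2 - (w2 - p2)) = (p1 + p2) + (p1 + p2) - (w1 + w2)"
      by (simp add: algebra_simps)
    also have "\<dots> = p + p - (p + q)" using pp(1) w(1) by simp
    also have "\<dots> = p - q" by simp
    also have "\<dots> = y" unfolding p_def q_def by (rule sup_zero_diff_sup_neg_zero)
    finally show "y = (p1 - (w1 - p1)) + (p2 - (w2 - p2))" by simp
    show "lmod (p1 - (w1 - p1)) \<le> x1"
      using lmod_diff_le_add[of p1 "w1 - p1"] pp w by simp
    show "lmod (p2 - (w2 - p2)) \<le> x2"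
      using lmod_diff_le_add[of p2 "w2 - p2"] pp w by simp
  qed
qed

section \<open>Suprema of linear functionals and extension from a cone\<close>

lemma linear_blinfun_apply: "linear (blinfun_apply f)"
  by (rule bounded_linear.linear[OF blinfun.bounded_linear_right])

lemma cSup_image_set_plus:
  fixes \<phi> :: "'v::real_vector \<Rightarrow> real"
  assumes "linear \<phi>" and ne: "A \<noteq> {}" "B \<noteq> {}"
    and bdd: "bdd_above (\<phi> ` A)" "bdd_above (\<phi> ` B)"
  shows "Sup (\<phi> ` (A + B)) = Sup (\<phi> ` A) + Sup (\<phi> ` B)"
proof (rule antisym)
  have bound: "\<phi> s \<le> Sup (\<phi> ` A) + Sup (\<phi> ` B)" if "s \<in> A + B" for s
  proof -
    from that obtain a b where "s = a + b" "a \<in> A" "b \<in> B" by (rule set_plus_elim)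
    then show ?thesis
      using linear_add[OF \<open>linear \<phi>\<close>] cSup_upper[OF imageI bdd(1)] cSup_upper[OF imageI bdd(2)]
      by (simp add: add_mono)
  qed
  have ne_sum: "A + B \<noteq> {}" using ne by (auto simp: set_plus_def)
  then show "Sup (\<phi> ` (A + B)) \<le> Sup (\<phi> ` A) + Sup (\<phi> ` B)"
    using bound by (auto intro!: cSup_least)
  have bdd_sum: "bdd_above (\<phi> ` (A + B))" using bound by (auto intro!: bdd_aboveI)
  have "Sup (\<phi> ` A) \<le> Sup (\<phi> ` (A + B)) - Sup (\<phi> ` B)"
  proof (rule cSup_least)
    fix t assume "t \<in> \<phi> ` A"
    then obtain a where a: "a \<in> A" "t = \<phi> a" by auto
    have "Sup (\<phi> ` B) \<le> Sup (\<phi> ` (A + B)) - \<phi> a"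
    proof (rule cSup_least)
      fix r assume "r \<in> \<phi> ` B"
      then obtain b where b: "b \<in> B" "r = \<phi> b" by auto
      have "\<phi> (a + b) \<le> Sup (\<phi> ` (A + B))"
        using a b by (intro cSup_upper[OF _ bdd_sum]) auto
      then show "r \<le> Sup (\<phi> ` (A + B)) - \<phi> a"
        using linear_add[OF \<open>linear \<phi>\<close>] b by simp
    qed (use ne in auto)
    then show "t \<le> Sup (\<phi> ` (A + B)) - Sup (\<phi> ` B)" using a by simp
  qed (use ne in auto)
  then show "Sup (\<phi> ` A) + Sup (\<phi> ` B) \<le> Sup (\<phi> ` (A + B))" by simp
qed

lemma cSup_image_scaleR:
  fixes \<phi> :: "'v::real_vector \<Rightarrow> real"
  assumes "linear \<phi>" "0 \<le> c" "A \<noteq> {}" "bdd_above (\<phi> ` A)"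
  shows "Sup (\<phi> ` scaleR c ` A) = c * Sup (\<phi> ` A)"
proof -
  have "\<phi> ` scaleR c ` A = (\<lambda>t. c * t) ` \<phi> ` A"
    using linear_scale[OF \<open>linear \<phi>\<close>] by (auto simp: image_image)
  moreover have "c * Sup (\<phi> ` A) = Sup ((\<lambda>t. c * t) ` \<phi> ` A)"
    using assms by (intro continuous_at_Sup_mono)
      (auto simp: mono_def mult_left_mono intro!: continuous_intros)
  ultimately show ?thesis by simp
qed

text \<open>p writes every vector v as the difference p v - (p v - v) of two elements of the
  cone C; by additivity of m on C, any other such splitting gives the same value.\<close>
locale cone_extension =
  fixes C :: "'v::real_normed_vector set" and m :: "'v \<Rightarrow> real" and p :: "'v \<Rightarrow> 'v"
  assumes cone_add: "\<And>a b. a \<in> C \<Longrightarrow> b \<in> C \<Longrightarrow> a + b \<in> C"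
    and cone_scaleR: "\<And>c a. a \<in> C \<Longrightarrow> 0 < c \<Longrightarrow> c *\<^sub>R a \<in> C"
    and additive_on_cone: "\<And>a b. a \<in> C \<Longrightarrow> b \<in> C \<Longrightarrow> m (a + b) = m a + m b"
    and homogeneous_on_cone: "\<And>c a. a \<in> C \<Longrightarrow> 0 < c \<Longrightarrow> m (c *\<^sub>R a) = c * m a"
    and cone_split: "\<And>v. p v \<in> C" "\<And>v. p v - v \<in> C"
begin

lemma extension_independent:
  assumes "a \<in> C" "b \<in> C" "v = a - b"
  shows "m (p v) - m (p v - v) = m a - m b"
proof -
  have "p v + b = a + (p v - v)" unfolding assms(3) by (simp add: algebra_simps)
  then have "m (p v + b) = m (a + (p v - v))" by (rule arg_cong)
  then show ?thesis using assms(1,2) cone_split additive_on_cone by simp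
qed

lemma extension_eq:
  assumes "a \<in> C"
  shows "m (p a) - m (p a - a) = m a"
proof -
  have "m (p a) - m (p a - a) = m (2 *\<^sub>R a) - m a"
    using assms cone_scaleR by (intro extension_independent) (simp_all add: scaleR_2 cone_add)
  also have "\<dots> = m a" using assms homogeneous_on_cone[of a 2] by simp
  finally show ?thesis .
qed

lemma linear_extension: "linear (\<lambda>v. m (p v) - m (p v - v))"
proof (rule linearI)
  fix u v
  have "m (p (u + v)) - m (p (u + v) - (u + v)) = m (p u + p v) - m ((p u - u) + (p v - v))"
    by (rule extension_independent) (simp_all add: cone_add cone_split)
  also have "\<dots> = (m (p u) - m (p u - u)) + (m (p v) - m (p v - v))"
    by (simp add: additive_on_cone cone_split)
  finally show "m (p (u + v)) - m (p (u + v) - (u + v))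
      = (m (p u) - m (p u - u)) + (m (p v) - m (p v - v))" .
next
  fix c :: real and v
  consider "0 < c" | "c = 0" | "c < 0" by linarith
  then show "m (p (c *\<^sub>R v)) - m (p (c *\<^sub>R v) - c *\<^sub>R v) = c *\<^sub>R (m (p v) - m (p v - v))"
  proof cases
    case 1
    have "m (p (c *\<^sub>R v)) - m (p (c *\<^sub>R v) - c *\<^sub>R v) = m (c *\<^sub>R p v) - m (c *\<^sub>R (p v - v))"
    proof (rule extension_independent)
      show "c *\<^sub>R v = c *\<^sub>R p v - c *\<^sub>R (p v - v)" by (simp add: algebra_simps)
    qed (simp_all add: 1 cone_scaleR cone_split)
    then show ?thesis using 1 by (simp add: homogeneous_on_cone cone_split right_diff_distrib)
  next
    case 2
    then show ?thesis using extension_independent[of "p 0" "p 0" 0] by (simp add: cone_split)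
  next
    case 3
    have "m (p (c *\<^sub>R v)) - m (p (c *\<^sub>R v) - c *\<^sub>R v) = m ((- c) *\<^sub>R (p v - v)) - m ((- c) *\<^sub>R p v)"
    proof (rule extension_independent)
      show "c *\<^sub>R v = (- c) *\<^sub>R (p v - v) - (- c) *\<^sub>R p v" by (simp add: algebra_simps)
    qed (use 3 in \<open>intro cone_scaleR cone_split; simp\<close>)+
    then show ?thesis
      using 3 homogeneous_on_cone[OF cone_split(1), of "- c"] homogeneous_on_cone[OF cone_split(2), of "- c"]
      by (simp add: algebra_simps)
  qed
qed

end

locale bounded_cone_extension = cone_extension +
  fixes M L :: real
  assumes nonneg_on_cone: "\<And>a. a \<in> C \<Longrightarrow> 0 \<le> m a"
    and bounded_on_cone: "\<And>a. a \<in> C \<Longrightarrow> m a \<le> M * norm a"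
    and bound_nonneg: "0 \<le> M"
    and split_bounded: "\<And>v. norm (p v) \<le> L * norm v" "\<And>v. norm (p v - v) \<le> L * norm v"
begin

lemma abs_extension_le: "\<bar>m (p v) - m (p v - v)\<bar> \<le> M * L * norm v"
proof -
  have "M * norm a \<le> M * (L * norm v)" if "norm a \<le> L * norm v" for a
    using that bound_nonneg by (rule mult_left_mono)
  then have "m a \<le> M * (L * norm v)" if "a \<in> C" "norm a \<le> L * norm v" for a
    using bounded_on_cone that by (meson order_trans)
  then show ?thesis
    using split_bounded[of v] nonneg_on_cone cone_split
    by (simp add: abs_le_iff algebra_simps add_increasing)
qed

lemma bounded_linear_extension: "bounded_linear (\<lambda>v. m (p v) - m (p v - v))"
  using linear_extension abs_extension_le
  unfolding bounded_linear_def bounded_linear_axioms_def by (metis mult.commute real_norm_def)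

end

section \<open>The modulus in the dual\<close>

definition symmetric_interval :: "'a::banach_lattice \<Rightarrow> 'a set" where
  "symmetric_interval x = {y. lmod y \<le> x}"

lemma zero_in_symmetric_interval: "0 \<le> x \<Longrightarrow> 0 \<in> symmetric_interval x"
  unfolding symmetric_interval_def by (simp add: lmod_def)

lemma self_in_symmetric_interval: "0 \<le> x \<Longrightarrow> x \<in> symmetric_interval x"
  unfolding symmetric_interval_def by (simp add: lmod_eq_self)

lemma uminus_in_symmetric_interval: "y \<in> symmetric_interval x \<Longrightarrow> - y \<in> symmetric_interval x"
  unfolding symmetric_interval_def by (simp add: lmod_uminus)

lemma norm_le_of_in_symmetric_interval:
  "y \<in> symmetric_interval x \<Longrightarrow> 0 \<le> x \<Longrightarrow> norm y \<le> norm x"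
  unfolding symmetric_interval_def by (rule norm_le_of_lmod_le) simp_all

lemma symmetric_interval_add:
  assumes "0 \<le> x1" "0 \<le> x2"
  shows "symmetric_interval (x1 + x2) = symmetric_interval x1 + symmetric_interval x2"
proof (intro equalityI subsetI)
  fix y assume "y \<in> symmetric_interval (x1 + x2)"
  then have "lmod y \<le> x1 + x2" unfolding symmetric_interval_def by simp
  then obtain y1 y2 where "y = y1 + y2" "lmod y1 \<le> x1" "lmod y2 \<le> x2"
    using assms by (rule lmod_riesz_decomposition)
  then show "y \<in> symmetric_interval x1 + symmetric_interval x2"
    unfolding symmetric_interval_def by auto
next
  fix y assume "y \<in> symmetric_interval x1 + symmetric_interval x2"
  then obtain y1 y2 where "y = y1 + y2" "lmod y1 \<le> x1" "lmod y2 \<le> x2"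
    unfolding symmetric_interval_def by (auto elim: set_plus_elim)
  then have "lmod y \<le> x1 + x2" using lmod_add_le[of y1 y2] by (metis add_mono order_trans)
  then show "y \<in> symmetric_interval (x1 + x2)" unfolding symmetric_interval_def by simp
qed

lemma symmetric_interval_scaleR:
  assumes "0 < c"
  shows "symmetric_interval (c *\<^sub>R x) = scaleR c ` symmetric_interval x"
proof (intro equalityI subsetI)
  fix y assume "y \<in> symmetric_interval (c *\<^sub>R x)"
  then have "lmod y \<le> c *\<^sub>R x" unfolding symmetric_interval_def by simp
  have "lmod (inverse c *\<^sub>R y) = inverse c *\<^sub>R lmod y" using assms by (simp add: lmod_scaleR)
  also have "\<dots> \<le> inverse c *\<^sub>R (c *\<^sub>R x)"
    using assms \<open>lmod y \<le> c *\<^sub>R x\<close> by (intro scaleR_left_mono) auto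
  finally have "inverse c *\<^sub>R y \<in> symmetric_interval x"
    using assms unfolding symmetric_interval_def by simp
  moreover have "y = c *\<^sub>R (inverse c *\<^sub>R y)" using assms by simp
  ultimately show "y \<in> scaleR c ` symmetric_interval x" by blast
next
  fix y assume "y \<in> scaleR c ` symmetric_interval x"
  then obtain z where "y = c *\<^sub>R z" "lmod z \<le> x" unfolding symmetric_interval_def by auto
  then show "y \<in> symmetric_interval (c *\<^sub>R x)"
    using assms unfolding symmetric_interval_def by (simp add: lmod_scaleR scaleR_left_mono)
qed

lemma blinfun_le_on_symmetric_interval:
  assumes "y \<in> symmetric_interval x" "0 \<le> x"
  shows "blinfun_apply f y \<le> norm f * norm x"
proof -
  have "blinfun_apply f y \<le> norm f * norm y"
    using norm_blinfun[of f y] by simp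
  also have "\<dots> \<le> norm f * norm x"
    using norm_le_of_in_symmetric_interval[OF assms] by (simp add: mult_left_mono)
  finally show ?thesis .
qed

lemma bdd_above_symmetric_interval:
  fixes f :: "'a::banach_lattice \<Rightarrow>\<^sub>L real"
  assumes "0 \<le> x"
  shows "bdd_above (blinfun_apply f ` symmetric_interval x)"
proof (rule bdd_aboveI2)
  fix y assume "y \<in> symmetric_interval x"
  then show "blinfun_apply f y \<le> norm f * norm x"
    using assms by (rule blinfun_le_on_symmetric_interval)
qed

text \<open>On positive x, the Riesz--Kantorovich formula for the modulus of f.\<close>
definition modulus_sup :: "('a::banach_lattice \<Rightarrow>\<^sub>L real) \<Rightarrow> 'a \<Rightarrow> real" where
  "modulus_sup f x = Sup (blinfun_apply f ` symmetric_interval x)"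

lemma modulus_sup_upper:
  "y \<in> symmetric_interval x \<Longrightarrow> 0 \<le> x \<Longrightarrow> blinfun_apply f y \<le> modulus_sup f x"
  unfolding modulus_sup_def by (rule cSup_upper) (auto intro: bdd_above_symmetric_interval)

lemma modulus_sup_least:
  assumes "0 \<le> x" "\<And>y. y \<in> symmetric_interval x \<Longrightarrow> blinfun_apply f y \<le> B"
  shows "modulus_sup f x \<le> B"
  unfolding modulus_sup_def using assms zero_in_symmetric_interval by (auto intro!: cSup_least)

lemma modulus_sup_nonneg: "0 \<le> x \<Longrightarrow> 0 \<le> modulus_sup f x"
  using modulus_sup_upper[OF zero_in_symmetric_interval] by fastforce

lemma modulus_sup_le_norm: "0 \<le> x \<Longrightarrow> modulus_sup f x \<le> norm f * norm x"
  by (rule modulus_sup_least) (auto intro: blinfun_le_on_symmetric_interval)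

lemma modulus_sup_add:
  assumes "0 \<le> x1" "0 \<le> x2"
  shows "modulus_sup f (x1 + x2) = modulus_sup f x1 + modulus_sup f x2"
  unfolding modulus_sup_def symmetric_interval_add[OF assms]
  using assms zero_in_symmetric_interval[OF assms(1)] zero_in_symmetric_interval[OF assms(2)]
  by (intro cSup_image_set_plus linear_blinfun_apply bdd_above_symmetric_interval) auto

lemma modulus_sup_scaleR:
  assumes "0 \<le> x" "0 < c"
  shows "modulus_sup f (c *\<^sub>R x) = c * modulus_sup f x"
  unfolding modulus_sup_def symmetric_interval_scaleR[OF assms(2)]
  using assms zero_in_symmetric_interval[OF assms(1)]
  by (intro cSup_image_scaleR linear_blinfun_apply bdd_above_symmetric_interval) auto

lemma bounded_cone_extension_modulus_sup:
  "bounded_cone_extension {x. 0 \<le> x} (modulus_sup f) (\<lambda>v. sup v 0) (norm f) 1"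
proof unfold_locales
  fix v :: 'a
  show "norm (sup v 0 - v) \<le> 1 * norm v"
    using norm_sup_zero_le[of "- v"] by (simp add: sup_zero_diff_self)
qed (auto simp: modulus_sup_add modulus_sup_scaleR modulus_sup_nonneg modulus_sup_le_norm
    sup_zero_diff_self norm_sup_zero_le scaleR_nonneg_nonneg)

lemma dual_abs_pos_eq_modulus_sup:
  assumes "0 \<le> x"
  shows "dual_abs_pos f x = modulus_sup f x"
proof -
  have "{\<bar>blinfun_apply f y\<bar> | y. lmod y \<le> x} = (\<lambda>y. \<bar>blinfun_apply f y\<bar>) ` symmetric_interval x"
    unfolding symmetric_interval_def by auto
  moreover have "Sup ((\<lambda>y. \<bar>blinfun_apply f y\<bar>) ` symmetric_interval x) = modulus_sup f x"
  proof (rule antisym)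
    show "Sup ((\<lambda>y. \<bar>blinfun_apply f y\<bar>) ` symmetric_interval x) \<le> modulus_sup f x"
      using zero_in_symmetric_interval[OF assms]
        modulus_sup_upper[OF _ assms] modulus_sup_upper[OF uminus_in_symmetric_interval assms]
      by (auto intro!: cSup_least simp: abs_le_iff blinfun.minus_right)
    have "\<bar>blinfun_apply f y\<bar> \<le> norm f * norm x" if "y \<in> symmetric_interval x" for y
      using blinfun_le_on_symmetric_interval[OF that assms, of f]
        blinfun_le_on_symmetric_interval[OF uminus_in_symmetric_interval[OF that] assms, of f]
      by (simp add: blinfun.minus_right abs_le_iff)
    then have "bdd_above ((\<lambda>y. \<bar>blinfun_apply f y\<bar>) ` symmetric_interval x)"
      by (intro bdd_aboveI2)
    then show "modulus_sup f x \<le> Sup ((\<lambda>y. \<bar>blinfun_apply f y\<bar>) ` symmetric_interval x)"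
      using assms by (intro modulus_sup_least) (auto intro: cSup_upper2)
  qed
  ultimately show ?thesis unfolding dual_abs_pos_def by simp
qed

lemma dual_abs_eq_modulus_sup:
  "dual_abs f v = modulus_sup f (sup v 0) - modulus_sup f (sup v 0 - v)"
  unfolding dual_abs_def sup_zero_diff_self by (simp add: dual_abs_pos_eq_modulus_sup)

definition dual_modulus :: "('a::banach_lattice \<Rightarrow>\<^sub>L real) \<Rightarrow> ('a \<Rightarrow>\<^sub>L real)" where
  "dual_modulus f = Blinfun (dual_abs f)"

lemma dual_modulus_apply: "blinfun_apply (dual_modulus f) = dual_abs f"
  using bounded_cone_extension.bounded_linear_extension[OF bounded_cone_extension_modulus_sup]
  unfolding dual_modulus_def dual_abs_eq_modulus_sup[abs_def] by (rule bounded_linear_Blinfun_apply)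

lemma dual_modulus_eq_modulus_sup:
  assumes "0 \<le> x"
  shows "blinfun_apply (dual_modulus f) x = modulus_sup f x"
proof -
  interpret bounded_cone_extension "{x. 0 \<le> x}" "modulus_sup f" "\<lambda>v. sup v 0" "norm f" 1
    by (rule bounded_cone_extension_modulus_sup)
  show ?thesis
    using assms extension_eq[of x] by (simp add: dual_modulus_apply dual_abs_eq_modulus_sup)
qed

lemma norm_dual_modulus_le: "norm (dual_modulus f) \<le> norm f"
  using bounded_cone_extension.abs_extension_le[OF bounded_cone_extension_modulus_sup]
  by (intro norm_blinfun_bound) (auto simp: dual_modulus_apply dual_abs_eq_modulus_sup mult.commute)

section \<open>Positive functionals and the Riesz decomposition in the dual\<close>

lemma blinfun_eq_on_cone:
  fixes f g :: "'a::banach_lattice \<Rightarrow>\<^sub>L real"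
  assumes "\<And>x. 0 \<le> x \<Longrightarrow> blinfun_apply f x = blinfun_apply g x"
  shows "f = g"
proof (rule blinfun_eqI)
  fix x :: 'a
  have "blinfun_apply f (sup x 0) = blinfun_apply g (sup x 0)"
    "blinfun_apply f (sup (- x) 0) = blinfun_apply g (sup (- x) 0)"
    by (simp_all add: assms)
  then have "blinfun_apply f (sup x 0 - sup (- x) 0) = blinfun_apply g (sup x 0 - sup (- x) 0)"
    by (simp only: blinfun.diff_right)
  then show "blinfun_apply f x = blinfun_apply g x" by (simp only: sup_zero_diff_sup_neg_zero)
qed

definition dual_nonneg :: "('a::banach_lattice \<Rightarrow>\<^sub>L real) \<Rightarrow> bool" where
  "dual_nonneg g \<longleftrightarrow> (\<forall>x. 0 \<le> x \<longrightarrow> 0 \<le> blinfun_apply g x)"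

lemma dual_nonneg_mono:
  assumes "dual_nonneg g" "y \<le> x"
  shows "blinfun_apply g y \<le> blinfun_apply g x"
proof -
  have "0 \<le> blinfun_apply g (x - y)" using assms unfolding dual_nonneg_def by simp
  then show ?thesis by (simp add: blinfun.diff_right)
qed

lemma dual_nonneg_abs_le:
  assumes "dual_nonneg g" "lmod y \<le> x"
  shows "\<bar>blinfun_apply g y\<bar> \<le> blinfun_apply g x"
  using dual_nonneg_mono[OF assms(1), of y x] dual_nonneg_mono[OF assms(1), of "- y" x] assms(2)
  unfolding lmod_le_iff by (simp add: blinfun.minus_right abs_le_iff)

lemma abs_le_dual_modulus: "0 \<le> x \<Longrightarrow> \<bar>blinfun_apply f x\<bar> \<le> blinfun_apply (dual_modulus f) x"
  using modulus_sup_upper[OF self_in_symmetric_interval, of x f]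
    modulus_sup_upper[OF uminus_in_symmetric_interval[OF self_in_symmetric_interval], of x f]
  by (simp add: dual_modulus_eq_modulus_sup blinfun.minus_right abs_le_iff)

text \<open>A vector y of [-x, x] splits into its positive and negative parts, whose sum
  lmod y lies below x.\<close>
lemma dual_modulus_le:
  assumes "\<And>x. 0 \<le> x \<Longrightarrow> \<bar>blinfun_apply f x\<bar> \<le> blinfun_apply g x" and "0 \<le> x"
  shows "blinfun_apply (dual_modulus f) x \<le> blinfun_apply g x"
proof -
  have g: "dual_nonneg g" unfolding dual_nonneg_def using assms(1) by (meson abs_ge_zero order_trans)
  have "blinfun_apply f y \<le> blinfun_apply g x" if "y \<in> symmetric_interval x" for y
  proof -
    have "blinfun_apply f y = blinfun_apply f (sup y 0) - blinfun_apply f (sup (- y) 0)"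
      by (simp only: blinfun.diff_right[symmetric] sup_zero_diff_sup_neg_zero)
    also have "\<dots> \<le> blinfun_apply g (sup y 0) + blinfun_apply g (sup (- y) 0)"
      using assms(1)[of "sup y 0"] assms(1)[of "sup (- y) 0"] by (simp add: abs_le_iff)
    also have "\<dots> = blinfun_apply g (lmod y)"
      by (simp add: lmod_eq_sup_zero_add blinfun.add_right)
    also have "\<dots> \<le> blinfun_apply g x"
      using that g unfolding symmetric_interval_def by (auto intro: dual_nonneg_mono)
    finally show ?thesis .
  qed
  then show ?thesis
    using assms(2) by (simp add: dual_modulus_eq_modulus_sup modulus_sup_least)
qed

lemma dual_nonneg_dual_modulus: "dual_nonneg (dual_modulus f)"
  unfolding dual_nonneg_def using abs_le_dual_modulus by (meson abs_ge_zero order_trans)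

lemma dual_modulus_eq_self: "dual_nonneg g \<Longrightarrow> dual_modulus g = g"
  by (intro blinfun_eq_on_cone antisym dual_modulus_le)
    (auto simp: dual_nonneg_def dest: abs_le_dual_modulus[of _ g])

lemma dual_abs_dual_modulus: "dual_abs (dual_modulus f) = dual_abs f"
  by (simp only: dual_modulus_apply[symmetric] dual_modulus_eq_self[OF dual_nonneg_dual_modulus])

lemma norm_le_of_dual_nonneg:
  assumes "dual_nonneg k" "dual_nonneg (h - k)"
  shows "norm k \<le> norm h"
proof (rule norm_blinfun_bound)
  fix x :: 'a
  have "norm (blinfun_apply k x) \<le> blinfun_apply k (lmod x)"
    using dual_nonneg_abs_le[OF assms(1), of x "lmod x"] by simp
  also have "\<dots> \<le> blinfun_apply h (lmod x)"
    using assms(2) lmod_nonneg[of x] unfolding dual_nonneg_def by (simp add: blinfun.diff_left)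
  also have "\<dots> \<le> norm h * norm (lmod x)"
    using norm_blinfun[of h "lmod x"] by simp
  finally show "norm (blinfun_apply k x) \<le> norm h * norm x" by (simp add: norm_lmod)
qed simp

definition dual_interval :: "('a::banach_lattice \<Rightarrow>\<^sub>L real) \<Rightarrow> ('a \<Rightarrow>\<^sub>L real) set" where
  "dual_interval h = {k. dual_nonneg k \<and> dual_nonneg (h - k)}"

lemma zero_in_dual_interval: "dual_nonneg h \<Longrightarrow> 0 \<in> dual_interval h"
  unfolding dual_interval_def dual_nonneg_def by simp

lemma self_in_dual_interval: "dual_nonneg h \<Longrightarrow> h \<in> dual_interval h"
  unfolding dual_interval_def dual_nonneg_def by simp

text \<open>The Riesz decomposition property of E', with the splitting k = inf k h1 + (k - inf k h1)
  and inf k h1 = (k + h1 - |k - h1|) / 2.\<close>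
lemma dual_interval_add:
  assumes h1: "dual_nonneg h1" and h2: "dual_nonneg h2"
  shows "dual_interval (h1 + h2) = dual_interval h1 + dual_interval h2"
proof (intro equalityI subsetI)
  fix k assume "k \<in> dual_interval (h1 + h2)"
  then have k: "dual_nonneg k" "dual_nonneg (h1 + h2 - k)" unfolding dual_interval_def by auto
  define a where "a = dual_modulus (k - h1)"
  define k1 where "k1 = (1/2) *\<^sub>R (k + h1 - a)"
  have bounds: "\<bar>blinfun_apply k x - blinfun_apply h1 x\<bar> \<le> blinfun_apply a x"
      "blinfun_apply a x \<le> blinfun_apply k x + blinfun_apply h1 x"
      "blinfun_apply a x \<le> 2 * blinfun_apply h2 x + blinfun_apply h1 x - blinfun_apply k x"
    if "0 \<le> x" for x
  proof -
    show "\<bar>blinfun_apply k x - blinfun_apply h1 x\<bar> \<le> blinfun_apply a x"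
      using abs_le_dual_modulus[OF that, of "k - h1"] by (simp add: a_def blinfun.diff_left)
    have le_sum: "\<bar>blinfun_apply (k - h1) z\<bar> \<le> blinfun_apply (k + h1) z" if "0 \<le> z" for z
      using k h1 that unfolding dual_nonneg_def
      by (auto simp: blinfun.diff_left blinfun.add_left abs_le_iff)
    have le_complement: "\<bar>blinfun_apply (k - h1) z\<bar> \<le> blinfun_apply (2 *\<^sub>R h2 + h1 - k) z"
      if "0 \<le> z" for z
      using k h2 that unfolding dual_nonneg_def
      by (auto simp: blinfun.diff_left blinfun.add_left blinfun.scaleR_left abs_le_iff)
    show "blinfun_apply a x \<le> blinfun_apply k x + blinfun_apply h1 x"
      "blinfun_apply a x \<le> 2 * blinfun_apply h2 x + blinfun_apply h1 x - blinfun_apply k x"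
      using dual_modulus_le[OF le_sum that] dual_modulus_le[OF le_complement that] unfolding a_def
      by (simp_all add: blinfun.diff_left blinfun.add_left blinfun.scaleR_left)
  qed
  have k1_bounds: "0 \<le> blinfun_apply k1 x" "blinfun_apply k1 x \<le> blinfun_apply h1 x"
    "blinfun_apply k1 x \<le> blinfun_apply k x" "blinfun_apply k x - blinfun_apply k1 x \<le> blinfun_apply h2 x"
    if "0 \<le> x" for x
    using bounds[OF that] unfolding k1_def
    by (simp_all add: blinfun.diff_left blinfun.add_left blinfun.scaleR_left abs_le_iff field_simps)
  have "k1 \<in> dual_interval h1" "k - k1 \<in> dual_interval h2"
    unfolding dual_interval_def dual_nonneg_def by (simp_all add: blinfun.diff_left k1_bounds)
  then show "k \<in> dual_interval h1 + dual_interval h2"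
    by (metis add.commute diff_add_cancel set_plus_intro)
next
  fix k assume "k \<in> dual_interval h1 + dual_interval h2"
  then obtain k1 k2 where "k = k1 + k2" "k1 \<in> dual_interval h1" "k2 \<in> dual_interval h2"
    by (rule set_plus_elim)
  then show "k \<in> dual_interval (h1 + h2)"
    unfolding dual_interval_def dual_nonneg_def by (auto simp: blinfun.diff_left blinfun.add_left add_mono)
qed

lemma dual_interval_scaleR:
  assumes "0 < c"
  shows "dual_interval (c *\<^sub>R h) = scaleR c ` dual_interval h"
proof (intro equalityI subsetI)
  fix k assume "k \<in> dual_interval (c *\<^sub>R h)"
  then have "inverse c *\<^sub>R k \<in> dual_interval h"
    using assms unfolding dual_interval_def dual_nonneg_def
    by (auto simp: blinfun.diff_left blinfun.scaleR_left field_simps)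
  moreover have "k = c *\<^sub>R (inverse c *\<^sub>R k)" using assms by simp
  ultimately show "k \<in> scaleR c ` dual_interval h" by blast
next
  fix k assume "k \<in> scaleR c ` dual_interval h"
  then show "k \<in> dual_interval (c *\<^sub>R h)"
    using assms unfolding dual_interval_def dual_nonneg_def
    by (auto simp: blinfun.diff_left blinfun.scaleR_left algebra_simps)
qed

section \<open>The positive part in the bidual\<close>

lemma blinfun_le_on_dual_interval:
  assumes "k \<in> dual_interval h"
  shows "blinfun_apply \<Phi> k \<le> norm \<Phi> * norm h"
proof -
  have "blinfun_apply \<Phi> k \<le> norm \<Phi> * norm k"
    using norm_blinfun[of \<Phi> k] by simp
  also have "\<dots> \<le> norm \<Phi> * norm h"
    using assms unfolding dual_interval_def by (auto intro: mult_left_mono norm_le_of_dual_nonneg)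
  finally show ?thesis .
qed

lemma bdd_above_dual_interval:
  fixes \<Phi> :: "('a::banach_lattice \<Rightarrow>\<^sub>L real) \<Rightarrow>\<^sub>L real"
  shows "bdd_above (blinfun_apply \<Phi> ` dual_interval h)"
  by (rule bdd_aboveI2) (rule blinfun_le_on_dual_interval)

text \<open>On positive h, the Riesz--Kantorovich formula for the positive part of \<Phi> in E''.\<close>
definition pos_part_sup ::
    "(('a::banach_lattice \<Rightarrow>\<^sub>L real) \<Rightarrow>\<^sub>L real) \<Rightarrow> ('a \<Rightarrow>\<^sub>L real) \<Rightarrow> real" where
  "pos_part_sup \<Phi> h = Sup (blinfun_apply \<Phi> ` dual_interval h)"

lemma pos_part_sup_upper: "k \<in> dual_interval h \<Longrightarrow> blinfun_apply \<Phi> k \<le> pos_part_sup \<Phi> h"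
  unfolding pos_part_sup_def by (rule cSup_upper) (auto intro: bdd_above_dual_interval)

lemma pos_part_sup_le_norm:
  assumes "dual_nonneg h"
  shows "pos_part_sup \<Phi> h \<le> norm \<Phi> * norm h"
  unfolding pos_part_sup_def using zero_in_dual_interval[OF assms] blinfun_le_on_dual_interval
  by (intro cSup_least) auto

lemma pos_part_sup_add:
  assumes "dual_nonneg h1" "dual_nonneg h2"
  shows "pos_part_sup \<Phi> (h1 + h2) = pos_part_sup \<Phi> h1 + pos_part_sup \<Phi> h2"
  unfolding pos_part_sup_def dual_interval_add[OF assms]
  using zero_in_dual_interval[OF assms(1)] zero_in_dual_interval[OF assms(2)]
  by (intro cSup_image_set_plus linear_blinfun_apply bdd_above_dual_interval) auto

lemma pos_part_sup_scaleR:
  assumes "dual_nonneg h" "0 < c"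
  shows "pos_part_sup \<Phi> (c *\<^sub>R h) = c * pos_part_sup \<Phi> h"
  unfolding pos_part_sup_def dual_interval_scaleR[OF assms(2)]
  using assms zero_in_dual_interval[OF assms(1)]
  by (intro cSup_image_scaleR linear_blinfun_apply bdd_above_dual_interval) auto

lemma bounded_cone_extension_pos_part_sup:
  "bounded_cone_extension {h. dual_nonneg h} (pos_part_sup \<Phi>) dual_modulus (norm \<Phi>) 2"
proof unfold_locales
  fix h k :: "'a::banach_lattice \<Rightarrow>\<^sub>L real" and c :: real
  show "h \<in> {h. dual_nonneg h} \<Longrightarrow> k \<in> {h. dual_nonneg h} \<Longrightarrow> h + k \<in> {h. dual_nonneg h}"
    "h \<in> {h. dual_nonneg h} \<Longrightarrow> 0 < c \<Longrightarrow> c *\<^sub>R h \<in> {h. dual_nonneg h}"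
    unfolding dual_nonneg_def by (simp_all add: blinfun.add_left blinfun.scaleR_left)
  show "h \<in> {h. dual_nonneg h} \<Longrightarrow> 0 \<le> pos_part_sup \<Phi> h"
    using pos_part_sup_upper[OF zero_in_dual_interval] by fastforce
  show "dual_modulus k - k \<in> {h. dual_nonneg h}"
    using abs_le_dual_modulus unfolding dual_nonneg_def by (fastforce simp: blinfun.diff_left abs_le_iff)
  show "norm (dual_modulus k) \<le> 2 * norm k"
    using norm_dual_modulus_le[of k] norm_ge_zero[of k] by linarith
  show "norm (dual_modulus k - k) \<le> 2 * norm k"
    using norm_triangle_ineq4[of "dual_modulus k" k] norm_dual_modulus_le[of k] by simp
qed (auto simp: pos_part_sup_add pos_part_sup_scaleR pos_part_sup_le_norm dual_nonneg_dual_modulus)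

definition bidual_pos_part ::
    "(('a::banach_lattice \<Rightarrow>\<^sub>L real) \<Rightarrow>\<^sub>L real) \<Rightarrow> (('a \<Rightarrow>\<^sub>L real) \<Rightarrow>\<^sub>L real)" where
  "bidual_pos_part \<Phi> = Blinfun (\<lambda>k. pos_part_sup \<Phi> (dual_modulus k) - pos_part_sup \<Phi> (dual_modulus k - k))"

lemma bidual_pos_part_eq:
  assumes "dual_nonneg h"
  shows "blinfun_apply (bidual_pos_part \<Phi>) h = pos_part_sup \<Phi> h"
proof -
  interpret bounded_cone_extension "{h. dual_nonneg h}" "pos_part_sup \<Phi>" dual_modulus "norm \<Phi>" 2
    by (rule bounded_cone_extension_pos_part_sup)
  show ?thesis
    using assms extension_eq[of h]
    unfolding bidual_pos_part_def bounded_linear_Blinfun_apply[OF bounded_linear_extension] by simp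
qed

lemma bidual_pos_part_nonneg: "dual_nonneg h \<Longrightarrow> 0 \<le> blinfun_apply (bidual_pos_part \<Phi>) h"
  using pos_part_sup_upper[OF zero_in_dual_interval] by (fastforce simp: bidual_pos_part_eq)

lemma bidual_pos_part_ge: "dual_nonneg h \<Longrightarrow> blinfun_apply \<Phi> h \<le> blinfun_apply (bidual_pos_part \<Phi>) h"
  by (simp add: bidual_pos_part_eq pos_part_sup_upper self_in_dual_interval)

section \<open>Order-bounded sequences\<close>

text \<open>Each \<Phi> in E'' is the difference of two positive functionals, its positive part P
  and P - \<Phi>, and a positive functional \<Psi> sends c n into [- \<Psi> (b n), \<Psi> (b n)].\<close>
lemma weakly_null_order_bounded:
  fixes b c :: "nat \<Rightarrow> ('a::banach_lattice \<Rightarrow>\<^sub>L real)"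
  assumes bound: "\<And>n x. 0 \<le> x \<Longrightarrow> \<bar>blinfun_apply (c n) x\<bar> \<le> blinfun_apply (b n) x"
    and "weakly_null b"
  shows "weakly_null c"
proof -
  have "0 \<le> blinfun_apply (b n - c n) x" "0 \<le> blinfun_apply (b n + c n) x" if "0 \<le> x" for n x
    using bound[OF that, of n] by (simp_all add: blinfun.diff_left blinfun.add_left abs_le_iff)
  then have "dual_nonneg (b n - c n)" "dual_nonneg (b n + c n)" for n
    unfolding dual_nonneg_def by simp_all
  have to_zero: "(\<lambda>n. blinfun_apply \<Psi> (c n)) \<longlonglongrightarrow> 0"
    if \<Psi>: "\<And>h. dual_nonneg h \<Longrightarrow> 0 \<le> blinfun_apply \<Psi> h"
    for \<Psi> :: "('a \<Rightarrow>\<^sub>L real) \<Rightarrow>\<^sub>L real"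
  proof (rule Lim_null_comparison)
    have "\<bar>blinfun_apply \<Psi> (c n)\<bar> \<le> blinfun_apply \<Psi> (b n)" for n
      using \<Psi>[OF \<open>dual_nonneg (b n - c n)\<close>] \<Psi>[OF \<open>dual_nonneg (b n + c n)\<close>]
      by (simp add: blinfun.diff_right blinfun.add_right abs_le_iff)
    then show "\<forall>\<^sub>F n in sequentially. norm (blinfun_apply \<Psi> (c n)) \<le> blinfun_apply \<Psi> (b n)"
      by simp
    show "(\<lambda>n. blinfun_apply \<Psi> (b n)) \<longlonglongrightarrow> 0"
      using \<open>weakly_null b\<close> unfolding weakly_null_def by blast
  qed
  show ?thesis
    unfolding weakly_null_def
  proof
    fix \<Phi> :: "('a \<Rightarrow>\<^sub>L real) \<Rightarrow>\<^sub>L real"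
    have "(\<lambda>n. blinfun_apply (bidual_pos_part \<Phi>) (c n)
        - blinfun_apply (bidual_pos_part \<Phi> - \<Phi>) (c n)) \<longlonglongrightarrow> 0 - 0"
      using bidual_pos_part_nonneg bidual_pos_part_ge
      by (intro tendsto_diff to_zero) (simp_all add: blinfun.diff_left)
    then show "(\<lambda>n. blinfun_apply \<Phi> (c n)) \<longlonglongrightarrow> 0" by (simp add: blinfun.diff_left)
  qed
qed

lemma abs_comp_le_dual_modulus_comp:
  fixes S T :: "'a::banach_lattice \<Rightarrow>\<^sub>L 'b::banach_lattice" and f :: "'b \<Rightarrow>\<^sub>L real"
  assumes "positive_op S" "positive_op (T - S)" "0 \<le> x"
  shows "\<bar>blinfun_apply (f o\<^sub>L S) x\<bar> \<le> blinfun_apply (dual_modulus f o\<^sub>L T) x"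
proof -
  have "0 \<le> blinfun_apply S x" "blinfun_apply S x \<le> blinfun_apply T x"
    using assms unfolding positive_op_def by (auto simp: blinfun.diff_left)
  then have "\<bar>blinfun_apply f (blinfun_apply S x)\<bar> \<le> blinfun_apply (dual_modulus f) (blinfun_apply S x)"
    "blinfun_apply (dual_modulus f) (blinfun_apply S x) \<le> blinfun_apply (dual_modulus f) (blinfun_apply T x)"
    by (auto intro: abs_le_dual_modulus dual_nonneg_mono dual_nonneg_dual_modulus)
  then show ?thesis by simp
qed

lemma disjoint_seq_dual_modulus: "disjoint_seq y \<Longrightarrow> disjoint_seq (\<lambda>n. dual_modulus (y n))"
  unfolding disjoint_seq_def dual_disjoint_def by (simp add: dual_abs_dual_modulus)

lemma weak_star_null_dual_modulus:
  fixes y :: "nat \<Rightarrow> ('b::banach_lattice \<Rightarrow>\<^sub>L real)"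
  assumes "property_d TYPE('b)" "disjoint_seq y" "weak_star_null y"
  shows "weak_star_null (\<lambda>n. dual_modulus (y n))"
  using assms unfolding property_d_def weak_star_null_def by (simp add: dual_modulus_apply)

theorem mainTheorem13:
  fixes S T :: "'a::banach_lattice \<Rightarrow>\<^sub>L 'b::banach_lattice"
  assumes "property_d TYPE('b)"
    and "positive_op S"
    and "positive_op (T - S)"
    and "almost_grothendieck T"
  shows "almost_grothendieck S"
  unfolding almost_grothendieck_def
proof (intro allI impI)
  fix y :: "nat \<Rightarrow> ('b \<Rightarrow>\<^sub>L real)"
  assume "disjoint_seq y \<and> weak_star_null y"
  then have "disjoint_seq (\<lambda>n. dual_modulus (y n)) \<and> weak_star_null (\<lambda>n. dual_modulus (y n))"
    using assms(1) by (simp add: disjoint_seq_dual_modulus weak_star_null_dual_modulus)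
  then have "weakly_null (\<lambda>n. dual_modulus (y n) o\<^sub>L T)"
    using assms(4) unfolding almost_grothendieck_def by blast
  then show "weakly_null (\<lambda>n. y n o\<^sub>L S)"
    using abs_comp_le_dual_modulus_comp[OF assms(2,3)] by (rule weakly_null_order_bounded[rotated])
qed

end
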